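(* Let $K\subset\mathbb{R}$ be a real cubic number field with norm map $N=N_{K/\mathbb{Q}}$. Let $p,q$ be positive integers with $\gcd(p,q)=1$ and $p\not\equiv 0 \pmod 3$. Then for all $\alpha,\beta\in K\setminus\mathbb{Q}$ with $\alpha,\beta>0$, \[ \frac{|N(\alpha)|}{\alpha^{p/q}}=\frac{|N(\beta)|}{\beta^{p/q}}\quad\text{implies}\quad \alpha=\beta . \]
   Context: Here $\alpha^{p/q}$ denotes the positive real $(p/q)$-th power of the positive real number $\alpha$. *)

theory Defs
  imports "HOL-Analysis.Analysis"
begin

definition real_subfield :: "real set \<Rightarrow> bool" where
  "real_subfield K \<longleftrightarrow> 0 \<in> K \<and> 1 \<in> K \<and>
     (\<forall>x\<in>K. \<forall>y\<in>K. x + y \<in> K \<and> x * y \<in> K) \<and>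
     (\<forall>x\<in>K. - x \<in> K) \<and> (\<forall>x\<in>K. x \<noteq> 0 \<longrightarrow> inverse x \<in> K)"

definition is_Q_basis :: "real set \<Rightarrow> (3 \<Rightarrow> real) \<Rightarrow> bool" where
  "is_Q_basis K b \<longleftrightarrow> (\<forall>i. b i \<in> K) \<and>
     (\<forall>x\<in>K. \<exists>!c :: 3 \<Rightarrow> real. (\<forall>i. c i \<in> \<rat>) \<and> x = (\<Sum>i\<in>UNIV. c i * b i))"

definition real_cubic_field :: "real set \<Rightarrow> bool" where
  "real_cubic_field K \<longleftrightarrow> real_subfield K \<and> (\<exists>b. is_Q_basis K b)"

text \<open>The field norm N_{K/Q}(a): determinant of the Q-linear map x \<mapsto> a x on K,
  computed in a Q-basis of K.\<close>
definition field_norm :: "real set \<Rightarrow> real \<Rightarrow> real" where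
  "field_norm K a = (THE r. \<exists>b (M :: real^3^3). is_Q_basis K b \<and> (\<forall>i j. M $ i $ j \<in> \<rat>) \<and>
       (\<forall>i. a * b i = (\<Sum>j\<in>UNIV. M $ i $ j * b j)) \<and> r = det M)"

end

theory Submission
  imports Defs
begin

text \<open>Put \<open>\<gamma> = \<alpha> / \<beta>\<close> and \<open>e = p / q\<close>. Multiplicativity of the norm turns the hypothesis into
  \<open>\<bar>N(\<gamma>)\<bar> = \<gamma>\<^sup>e\<close>, so \<open>\<gamma>\<^sup>p = \<bar>N(\<gamma>)\<^sup>q\<bar>\<close> is rational. The norm of a rational \<open>r\<close> is \<open>r\<^sup>3\<close>, hence
  \<open>N(\<gamma>)\<^sup>p = N(\<gamma>\<^sup>p) = \<gamma>\<^sup>3\<^sup>p\<close> and \<open>\<bar>N(\<gamma>)\<bar> = \<gamma>\<^sup>3\<close>. Thus \<open>\<gamma>\<^sup>e = \<gamma>\<^sup>3\<close>, and \<open>e \<noteq> 3\<close> because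
  \<open>3\<close> does not divide \<open>p\<close>; so \<open>\<gamma> = 1\<close>.\<close>

lemma sum_matrix_matrix_mult:
  fixes A :: "'a::comm_ring_1^'m::finite^'n::finite" and B :: "'a^'k::finite^'m"
  shows "(\<Sum>j\<in>UNIV. A $ i $ j * (\<Sum>k\<in>UNIV. B $ j $ k * v k)) = (\<Sum>k\<in>UNIV. (A ** B) $ i $ k * v k)"
  by (simp add: matrix_matrix_mult_def sum_distrib_left sum_distrib_right mult.assoc
      sum.swap[of _ "UNIV::'m set"])

lemma matrix_matrix_mult_Rats:
  "(\<forall>i j. A $ i $ j \<in> \<rat>) \<Longrightarrow> (\<forall>i j. B $ i $ j \<in> \<rat>) \<Longrightarrow> (A ** B) $ i $ j \<in> \<rat>"
  for A :: "real^'m::finite^'n::finite" and B :: "real^'k::finite^'m"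
  by (auto simp: matrix_matrix_mult_def intro!: Rats_sum Rats_mult)

lemma det_Rats: "(\<forall>i j. M $ i $ j \<in> \<rat>) \<Longrightarrow> det M \<in> \<rat>"
  for M :: "real^'n::finite^'n"
  unfolding det_def by (intro Rats_sum Rats_mult Rats_prod) (auto simp: Rats_of_int)

locale Q_basis =
  fixes K :: "real set" and b :: "3 \<Rightarrow> real"
  assumes subfield: "real_subfield K" and basis: "is_Q_basis K b"
begin

lemma basis_in: "b i \<in> K"
  using basis unfolding is_Q_basis_def by auto

lemma mult_closed: "x \<in> K \<Longrightarrow> y \<in> K \<Longrightarrow> x * y \<in> K"
  using subfield unfolding real_subfield_def by auto

lemma power_closed: "x \<in> K \<Longrightarrow> x ^ n \<in> K"
  using subfield by (induction n) (auto simp: real_subfield_def)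

lemma inverse_closed: "x \<in> K \<Longrightarrow> inverse x \<in> K"
  using subfield unfolding real_subfield_def by (cases "x = 0") auto

definition coord :: "real \<Rightarrow> 3 \<Rightarrow> real" where
  "coord x = (SOME c. (\<forall>i. c i \<in> \<rat>) \<and> x = (\<Sum>i\<in>UNIV. c i * b i))"

lemma coord:
  assumes "x \<in> K"
  shows coord_Rats: "coord x i \<in> \<rat>" and coord_expansion: "x = (\<Sum>i\<in>UNIV. coord x i * b i)"
proof -
  have "\<exists>c. (\<forall>i. c i \<in> \<rat>) \<and> x = (\<Sum>i\<in>UNIV. c i * b i)"
    using basis assms unfolding is_Q_basis_def by blast
  then have "(\<forall>i. coord x i \<in> \<rat>) \<and> x = (\<Sum>i\<in>UNIV. coord x i * b i)"
    unfolding coord_def by (rule someI_ex)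
  then show "coord x i \<in> \<rat>" "x = (\<Sum>i\<in>UNIV. coord x i * b i)" by auto
qed

lemma matrix_eq_by_expansion:
  fixes A B :: "real^3^'n"
  assumes "\<And>i. x i \<in> K" "\<forall>i j. A $ i $ j \<in> \<rat>" "\<forall>i j. B $ i $ j \<in> \<rat>"
    and "\<And>i. x i = (\<Sum>j\<in>UNIV. A $ i $ j * b j)" "\<And>i. x i = (\<Sum>j\<in>UNIV. B $ i $ j * b j)"
  shows "A = B"
proof -
  have "(\<lambda>j. A $ i $ j) = (\<lambda>j. B $ i $ j)" for i
  proof -
    have "\<exists>!c. (\<forall>j. c j \<in> \<rat>) \<and> x i = (\<Sum>j\<in>UNIV. c j * b j)"
      using basis assms(1) unfolding is_Q_basis_def by blast
    then show ?thesis using assms(2-5) by blast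
  qed
  then show ?thesis by (simp add: vec_eq_iff fun_eq_iff)
qed

definition mult_matrix :: "real \<Rightarrow> real^3^3" where
  "mult_matrix a = (\<chi> i j. coord (a * b i) j)"

lemma mult_matrix_Rats: "a \<in> K \<Longrightarrow> \<forall>i j. mult_matrix a $ i $ j \<in> \<rat>"
  using coord_Rats[OF mult_closed[OF _ basis_in]] by (simp add: mult_matrix_def)

lemma mult_matrix_expansion: "a \<in> K \<Longrightarrow> a * b i = (\<Sum>j\<in>UNIV. mult_matrix a $ i $ j * b j)"
  using coord_expansion[OF mult_closed[OF _ basis_in]] by (simp add: mult_matrix_def)

lemma mult_matrix_unique:
  assumes "a \<in> K" "\<forall>i j. M $ i $ j \<in> \<rat>" "\<And>i. a * b i = (\<Sum>j\<in>UNIV. M $ i $ j * b j)"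
  shows "mult_matrix a = M"
proof (rule matrix_eq_by_expansion[of "\<lambda>i. a * b i"])
  show "a * b i \<in> K" for i using assms(1) basis_in by (rule mult_closed)
  show "a * b i = (\<Sum>j\<in>UNIV. mult_matrix a $ i $ j * b j)" for i
    using assms(1) by (rule mult_matrix_expansion)
qed (use assms mult_matrix_Rats in auto)

text \<open>The matrices act on coordinate rows from the right, so the product is reversed.\<close>
lemma mult_matrix_mult:
  assumes "x \<in> K" "y \<in> K"
  shows "mult_matrix (x * y) = mult_matrix y ** mult_matrix x"
proof (rule mult_matrix_unique)
  show "x * y \<in> K" using assms by (rule mult_closed)
  show "\<forall>i j. (mult_matrix y ** mult_matrix x) $ i $ j \<in> \<rat>"
    using assms by (simp add: matrix_matrix_mult_Rats mult_matrix_Rats)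
  fix i
  have "x * y * b i = (\<Sum>j\<in>UNIV. mult_matrix y $ i $ j * (x * b j))"
    using mult_matrix_expansion[OF assms(2)] by (simp add: sum_distrib_left mult_ac)
  also have "\<dots> = (\<Sum>k\<in>UNIV. (mult_matrix y ** mult_matrix x) $ i $ k * b k)"
    using mult_matrix_expansion[OF assms(1)] by (simp add: sum_matrix_matrix_mult)
  finally show "x * y * b i = (\<Sum>j\<in>UNIV. (mult_matrix y ** mult_matrix x) $ i $ j * b j)" .
qed

lemma det_mult_matrix_of_Rats:
  assumes "r \<in> K" "r \<in> \<rat>"
  shows "det (mult_matrix r) = r ^ 3"
proof -
  have "mult_matrix r = (\<chi> i j. if i = j then r else 0)"
  proof (rule mult_matrix_unique[OF assms(1)])
    show "\<forall>i j. (\<chi> i j. if i = j then r else 0) $ i $ j \<in> \<rat>" using assms by auto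
    fix i
    have "(\<lambda>j. (\<chi> i j. if i = j then r else 0) $ i $ j * b j) = (\<lambda>j. if i = j then r * b j else 0)"
      by auto
    then show "r * b i = (\<Sum>j\<in>UNIV. (\<chi> i j. if i = j then r else 0) $ i $ j * b j)"
      by (simp only:) simp
  qed
  then show ?thesis by (simp add: det_diagonal)
qed

end

text \<open>The change-of-basis matrix \<open>P\<close> is invertible and conjugates the two multiplication matrices.\<close>
lemma det_mult_matrix_basis_independent:
  assumes "Q_basis K b" "Q_basis K b'" "a \<in> K"
    and "\<forall>i j. M $ i $ j \<in> \<rat>" "\<And>i. a * b' i = (\<Sum>j\<in>UNIV. M $ i $ j * b' j)"
  shows "det M = det (Q_basis.mult_matrix b a)"
proof -
  interpret B: Q_basis K b by fact
  interpret B': Q_basis K b' by fact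
  let ?A = "B.mult_matrix a"
  define P :: "real^3^3" where "P = (\<chi> i j. B.coord (b' i) j)"
  define Q :: "real^3^3" where "Q = (\<chi> i j. B'.coord (b i) j)"
  have P_Rats: "\<forall>i j. P $ i $ j \<in> \<rat>" and Q_Rats: "\<forall>i j. Q $ i $ j \<in> \<rat>"
    using B.coord_Rats B'.coord_Rats B.basis_in B'.basis_in by (auto simp: P_def Q_def)
  have P_expansion: "b' i = (\<Sum>j\<in>UNIV. P $ i $ j * b j)" for i
    using B.coord_expansion B'.basis_in by (simp add: P_def)
  have Q_expansion: "b i = (\<Sum>j\<in>UNIV. Q $ i $ j * b' j)" for i
    using B'.coord_expansion B.basis_in by (simp add: Q_def)
  have "P ** Q = mat 1"
  proof (rule B'.matrix_eq_by_expansion[of b'])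
    show "\<forall>i j. (P ** Q) $ i $ j \<in> \<rat>"
      using P_Rats Q_Rats by (simp add: matrix_matrix_mult_Rats)
    fix i
    show "b' i = (\<Sum>j\<in>UNIV. (P ** Q) $ i $ j * b' j)"
      by (subst P_expansion, subst Q_expansion) (simp add: sum_matrix_matrix_mult)
    have "(\<lambda>j. mat 1 $ i $ j * b' j) = (\<lambda>j. if i = j then b' j else 0)"
      by (auto simp: mat_def)
    then show "b' i = (\<Sum>j\<in>UNIV. mat 1 $ i $ j * b' j)" by (simp only:) simp
  qed (auto simp: B'.basis_in mat_def)
  then have det_P: "det P \<noteq> 0" using det_mul[of P Q] by auto
  have "M ** P = P ** ?A"
  proof (rule B.matrix_eq_by_expansion[of "\<lambda>i. a * b' i"])
    show "\<forall>i j. (M ** P) $ i $ j \<in> \<rat>" "\<forall>i j. (P ** ?A) $ i $ j \<in> \<rat>"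
      using P_Rats assms(4) B.mult_matrix_Rats[OF assms(3)] by (simp_all add: matrix_matrix_mult_Rats)
    fix i
    show "a * b' i \<in> K" using assms(3) B'.basis_in by (rule B.mult_closed)
    show "a * b' i = (\<Sum>j\<in>UNIV. (M ** P) $ i $ j * b j)"
      by (subst assms(5), subst P_expansion) (simp add: sum_matrix_matrix_mult)
    have "a * b' i = (\<Sum>j\<in>UNIV. P $ i $ j * (a * b j))"
      by (subst P_expansion) (simp add: sum_distrib_left mult_ac)
    then show "a * b' i = (\<Sum>j\<in>UNIV. (P ** ?A) $ i $ j * b j)"
      using B.mult_matrix_expansion[OF assms(3)] by (simp add: sum_matrix_matrix_mult)
  qed
  then have "det M * det P = det P * det ?A" by (metis det_mul)
  then show ?thesis using det_P by simp
qed

lemma field_norm_eq_det_mult_matrix: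
  assumes "Q_basis K b" "a \<in> K"
  shows "field_norm K a = det (Q_basis.mult_matrix b a)"
  unfolding field_norm_def
proof (rule the_equality)
  interpret B: Q_basis K b by fact
  show "\<exists>b' M. is_Q_basis K b' \<and> (\<forall>i j. M $ i $ j \<in> \<rat>) \<and>
      (\<forall>i. a * b' i = (\<Sum>j\<in>UNIV. M $ i $ j * b' j)) \<and> det (B.mult_matrix a) = det M"
    using B.basis B.mult_matrix_Rats[OF assms(2)] B.mult_matrix_expansion[OF assms(2)] by blast
  fix r
  assume "\<exists>b' (M::real^3^3). is_Q_basis K b' \<and> (\<forall>i j. M $ i $ j \<in> \<rat>) \<and>
      (\<forall>i. a * b' i = (\<Sum>j\<in>UNIV. M $ i $ j * b' j)) \<and> r = det M"
  then obtain b' M where "is_Q_basis K b'" "\<forall>i j. M $ i $ j \<in> \<rat>"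
      "\<forall>i. a * b' i = (\<Sum>j\<in>UNIV. M $ i $ j * b' j)" "r = det M"
    by blast
  moreover from \<open>is_Q_basis K b'\<close> have "Q_basis K b'"
    using B.subfield by (simp add: Q_basis_def)
  ultimately show "r = det (B.mult_matrix a)"
    using det_mult_matrix_basis_independent[OF assms(1) _ assms(2)] by simp
qed

lemma real_cubic_field_Q_basis:
  assumes "real_cubic_field K"
  obtains b where "Q_basis K b"
  using assms unfolding real_cubic_field_def by (metis Q_basis.intro)

context Q_basis
begin

lemma field_norm_mult: "x \<in> K \<Longrightarrow> y \<in> K \<Longrightarrow> field_norm K (x * y) = field_norm K x * field_norm K y"
  by (simp add: field_norm_eq_det_mult_matrix[OF Q_basis_axioms] mult_closed mult_matrix_mult det_mul)

lemma field_norm_of_Rats: "r \<in> K \<Longrightarrow> r \<in> \<rat> \<Longrightarrow> field_norm K r = r ^ 3"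
  by (simp add: field_norm_eq_det_mult_matrix[OF Q_basis_axioms] det_mult_matrix_of_Rats)

lemma field_norm_in_Rats: "x \<in> K \<Longrightarrow> field_norm K x \<in> \<rat>"
  by (simp add: field_norm_eq_det_mult_matrix[OF Q_basis_axioms] det_Rats mult_matrix_Rats)

lemma one_in: "1 \<in> K"
  using subfield by (simp add: real_subfield_def)

lemma field_norm_power: "x \<in> K \<Longrightarrow> field_norm K (x ^ n) = field_norm K x ^ n"
  by (induction n) (simp_all add: one_in field_norm_of_Rats field_norm_mult power_closed)

lemma field_norm_nonzero:
  assumes "x \<in> K" "x \<noteq> 0"
  shows "field_norm K x \<noteq> 0"
proof -
  have "field_norm K x * field_norm K (inverse x) = field_norm K (x * inverse x)"
    using assms(1) by (simp add: field_norm_mult inverse_closed)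
  also have "\<dots> = 1"
    using assms(2) by (simp add: one_in field_norm_of_Rats)
  finally show ?thesis by auto
qed

lemma abs_field_norm_eq_cube:
  assumes "x \<in> K" "x > 0" "x ^ p \<in> \<rat>" "p > 0"
  shows "\<bar>field_norm K x\<bar> = x ^ 3"
proof -
  have "field_norm K x ^ p = field_norm K (x ^ p)"
    using assms(1) by (simp add: field_norm_power)
  also have "\<dots> = (x ^ 3) ^ p"
    using assms(1,3) by (simp add: field_norm_of_Rats power_closed mult.commute flip: power_mult)
  finally have "field_norm K x ^ p = (x ^ 3) ^ p" .
  then have "\<bar>field_norm K x\<bar> ^ p = (x ^ 3) ^ p"
    using assms(2) by (simp add: power_abs[symmetric])
  then show ?thesis
    by (rule power_eq_imp_eq_base) (use assms in auto)
qed

lemma eq_1_if_abs_field_norm_eq_powr: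
  fixes p q :: nat
  assumes "x \<in> K" "x > 0" "p > 0" "q > 0" "p \<noteq> 3 * q"
    and "\<bar>field_norm K x\<bar> = x powr (real p / real q)"
  shows "x = 1"
proof -
  have "x ^ p = \<bar>field_norm K x\<bar> ^ q"
    using assms by (simp add: powr_realpow[symmetric] powr_powr)
  then have "x ^ p \<in> \<rat>"
    using field_norm_in_Rats[OF assms(1)] by (metis Rats_abs_iff Rats_power)
  then have "x powr (real p / real q) = x powr 3"
    using abs_field_norm_eq_cube assms by (simp add: powr_realpow)
  moreover have "real p / real q \<noteq> 3"
    using assms(4,5) by (simp add: field_simps)
  ultimately show ?thesis using assms(2) powr_inj by blast
qed

end

theorem lemma2p1:
  fixes K :: "real set" and p q :: nat and \<alpha> \<beta> :: real
  assumes "real_cubic_field K"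
    and "p > 0" and "q > 0" and "coprime p q" and "\<not> (3 dvd p)"
    and "\<alpha> \<in> K" and "\<alpha> \<notin> \<rat>" and "\<beta> \<in> K" and "\<beta> \<notin> \<rat>"
    and "\<alpha> > 0" and "\<beta> > 0"
    and "\<bar>field_norm K \<alpha>\<bar> / \<alpha> powr (real p / real q)
         = \<bar>field_norm K \<beta>\<bar> / \<beta> powr (real p / real q)"
  shows "\<alpha> = \<beta>"
proof -
  obtain b where "Q_basis K b" using assms(1) by (rule real_cubic_field_Q_basis)
  then interpret Q_basis K b .
  define \<gamma> where "\<gamma> = \<alpha> * inverse \<beta>"
  have \<gamma>: "\<gamma> \<in> K" "\<gamma> > 0" "\<alpha> = \<gamma> * \<beta>"
    using assms(6,8,10,11) by (auto simp: \<gamma>_def mult_closed inverse_closed)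
  have "field_norm K \<beta> \<noteq> 0"
    using field_norm_nonzero assms(8,11) by auto
  then have "\<bar>field_norm K \<gamma>\<bar> = \<gamma> powr (real p / real q)"
    using assms(8,11,12) \<gamma> by (simp add: field_norm_mult abs_mult powr_mult field_simps)
  moreover have "p \<noteq> 3 * q" using assms(5) by auto
  ultimately have "\<gamma> = 1"
    using eq_1_if_abs_field_norm_eq_powr assms(2,3) \<gamma> by blast
  then show ?thesis using \<gamma>(3) by simp
qed

end
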